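(* Let $f\in\mathrm{Rat}_2$. (1) If $f$ has three distinct fixed points, then $\mathrm{Aut}(f)$ acts faithfully on the fixed point set and coincides with the group of all permutations of the three fixed points which preserve multipliers; hence $|\mathrm{Aut}(f)|$ is $1$, $2$ or $6$ according as the three multipliers are pairwise distinct, exactly two are equal, or all three are equal. (2) If $f$ has exactly two distinct fixed points, then $\mathrm{Aut}(f)$ is trivial. (3) If $f$ has exactly one fixed point, then $\mathrm{Aut}(f)$ is cyclic of order two.
   Context: $\mathrm{Rat}_2$ is the space of holomorphic degree-$2$ maps of the Riemann sphere; each $f$ has three fixed points counted with multiplicity, and the multiplier of a fixed point $z_i$ is $f'(z_i)$ (in the coordinate $1/z$ at $\infty$). An automorphism of $f$ is a Möbius transformation $g$ with $g\circ f\circ g^{-1}=f$; $\mathrm{Aut}(f)$ is the group of all automorphisms of $f$. *)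

theory Defs
  imports "HOL-Analysis.Analysis" "HOL-Computational_Algebra.Polynomial"
begin

text \<open>The Riemann sphere is modelled as \<open>complex option\<close>: \<open>Some z\<close> is the finite
  point \<open>z\<close> and \<open>None\<close> is the point \<open>\<infinity>\<close>.\<close>

type_synonym sphere = "complex option"

text \<open>For coprime \<open>P, Q\<close>
  with \<open>max (deg P) (deg Q) = 2\<close>, the value at \<open>\<infinity>\<close> is the limit, i.e. the ratio of the
  degree-2 coefficients (\<open>\<infinity>\<close> if \<open>deg Q < 2\<close>).\<close>
definition rat_eval :: "complex poly \<Rightarrow> complex poly \<Rightarrow> sphere \<Rightarrow> sphere" where
  "rat_eval P Q w = (case w of
      Some z \<Rightarrow> (if poly Q z = 0 then None else Some (poly P z / poly Q z))
    | None \<Rightarrow> (if coeff Q 2 = 0 then None else Some (coeff P 2 / coeff Q 2)))"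

definition Rat2 :: "(sphere \<Rightarrow> sphere) set" where
  "Rat2 = {rat_eval P Q | P Q. coprime P Q \<and> max (degree P) (degree Q) = 2}"

definition moebius :: "complex \<Rightarrow> complex \<Rightarrow> complex \<Rightarrow> complex \<Rightarrow> sphere \<Rightarrow> sphere" where
  "moebius a b c d w = (case w of
      Some z \<Rightarrow> (if c * z + d = 0 then None else Some ((a * z + b) / (c * z + d)))
    | None \<Rightarrow> (if c = 0 then None else Some (a / c)))"

definition Moeb :: "(sphere \<Rightarrow> sphere) set" where
  "Moeb = {moebius a b c d | a b c d. a * d - b * c \<noteq> 0}"

definition Aut :: "(sphere \<Rightarrow> sphere) \<Rightarrow> (sphere \<Rightarrow> sphere) set" where
  "Aut f = {g \<in> Moeb. g \<circ> f \<circ> inv g = f}"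

definition fixpts :: "(sphere \<Rightarrow> sphere) \<Rightarrow> sphere set" where
  "fixpts f = {z. f z = z}"

definition chart_inf :: "sphere \<Rightarrow> complex" where
  "chart_inf w = (case w of None \<Rightarrow> 0 | Some z \<Rightarrow> 1 / z)"

definition chart_inf_inv :: "complex \<Rightarrow> sphere" where
  "chart_inf_inv w = (if w = 0 then None else Some (1 / w))"

definition multiplier :: "(sphere \<Rightarrow> sphere) \<Rightarrow> sphere \<Rightarrow> complex" where
  "multiplier f p = (case p of
      Some z \<Rightarrow> deriv (\<lambda>w. the (f (Some w))) z
    | None \<Rightarrow> deriv (\<lambda>w. chart_inf (f (chart_inf_inv w))) 0)"

end

theory Submission
  imports Defs "HOL-Computational_Algebra.Fundamental_Theorem_Algebra"
begin

text \<open>A degree-two map is \<open>[x : y] \<mapsto> [P(x, y) : Q(x, y)]\<close> for binary quadratic forms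
  \<open>P, Q\<close> without common zero, and Moebius maps act linearly on \<open>[x : y]\<close>.  Conjugating by a
  Moebius map transforms \<open>(P, Q)\<close> explicitly and preserves multipliers, which are read off
  from the Jacobian of \<open>(P, Q)\<close> at a fixed point.  As Moebius maps act simply transitively on
  triples of distinct points, three fixed points can be moved to \<open>0, 1, \<infinity>\<close>, and the map is
  then determined by its multipliers at \<open>0\<close> and \<open>\<infinity>\<close>.  Hence an automorphism is determined by
  the permutation it induces on the fixed points, which preserves multipliers, and conversely
  the Moebius map extending a multiplier-preserving permutation conjugates \<open>f\<close> to a map with
  the same fixed points and multipliers, i.e. to \<open>f\<close> itself.  With two fixed points, moved to
  \<open>0\<close> and \<open>\<infinity>\<close>, exactly one has multiplier \<open>1\<close>, so automorphisms fix both and are scalings,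
  and commuting with \<open>f\<close> forces the trivial one.  With one fixed point, moved to \<open>\<infinity>\<close>, the map is
  \<open>z \<mapsto> z + e / (u z + v)\<close>, whose only nontrivial automorphism is the point reflection in its
  pole.\<close>

section \<open>Homogeneous coordinates and Moebius transformations\<close>

definition proj_point :: "complex \<Rightarrow> complex \<Rightarrow> sphere" where
  "proj_point x y = (if y = 0 then None else Some (x / y))"

definition proj_coords :: "sphere \<Rightarrow> complex \<times> complex" where
  "proj_coords p = (case p of None \<Rightarrow> (1, 0) | Some z \<Rightarrow> (z, 1))"

lemma proj_point_coords: "case_prod proj_point (proj_coords p) = p"
  by (cases p) (auto simp: proj_point_def proj_coords_def)

lemma proj_coords_nonzero: "proj_coords p \<noteq> (0, 0)"
  by (cases p) (auto simp: proj_coords_def)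

lemma proj_point_eq_iff:
  assumes "(x, y) \<noteq> (0, 0)" "(u, v) \<noteq> (0, 0)"
  shows "proj_point x y = proj_point u v \<longleftrightarrow> x * v = y * u"
  using assms by (auto simp: proj_point_def field_simps)

lemma proj_coords_point:
  assumes "(x, y) \<noteq> (0, 0)"
  obtains s where "s \<noteq> 0" "proj_coords (proj_point x y) = (s * x, s * y)"
proof (cases "y = 0")
  case True
  then show ?thesis using assms that[of "1 / x"] by (auto simp: proj_coords_def proj_point_def)
next
  case False
  then show ?thesis using that[of "1 / y"] by (auto simp: proj_coords_def proj_point_def)
qed

lemma proj_point_cases:
  obtains x y where "(x, y) \<noteq> (0, 0)" "p = proj_point x y"
  using proj_coords_nonzero[of p] proj_point_coords[of p] by (cases "proj_coords p") auto

lemma sphere_fun_eqI: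
  assumes "\<And>x y. (x, y) \<noteq> (0, 0) \<Longrightarrow> F (proj_point x y) = G (proj_point x y)"
  shows "F = G"
proof
  fix p show "F p = G p" by (cases p rule: proj_point_cases) (use assms in auto)
qed

lemma linear_image_nonzero:
  fixes a b c d x y :: complex
  assumes "a * d - b * c \<noteq> 0" "(x, y) \<noteq> (0, 0)"
  shows "(a * x + b * y, c * x + d * y) \<noteq> (0, 0)"
proof
  assume "(a * x + b * y, c * x + d * y) = (0, 0)"
  then have "a * x + b * y = 0" "c * x + d * y = 0" by auto
  moreover have "(a * d - b * c) * x = d * (a * x + b * y) - b * (c * x + d * y)"
    and "(a * d - b * c) * y = a * (c * x + d * y) - c * (a * x + b * y)"
    by (simp_all add: algebra_simps)
  ultimately show False using assms by auto
qed

lemma moebius_proj_point: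
  assumes "a * d - b * c \<noteq> 0" "(x, y) \<noteq> (0, 0)"
  shows "moebius a b c d (proj_point x y) = proj_point (a * x + b * y) (c * x + d * y)"
proof (cases "y = 0")
  case True
  then show ?thesis using assms by (auto simp: moebius_def proj_point_def)
next
  case False
  then have "c * (x / y) + d = (c * x + d * y) / y" "a * (x / y) + b = (a * x + b * y) / y"
    by (simp_all add: field_simps)
  then show ?thesis using False by (simp add: moebius_def proj_point_def)
qed

lemma moebius_comp:
  assumes "a * d - b * c \<noteq> 0" "a' * d' - b' * c' \<noteq> 0"
  shows "moebius a b c d \<circ> moebius a' b' c' d' =
    moebius (a * a' + b * c') (a * b' + b * d') (c * a' + d * c') (c * b' + d * d')"
proof (rule sphere_fun_eqI)
  fix x y :: complex
  assume xy: "(x, y) \<noteq> (0, 0)"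
  have det: "(a * a' + b * c') * (c * b' + d * d') - (a * b' + b * d') * (c * a' + d * c')
      = (a * d - b * c) * (a' * d' - b' * c')"
    by (simp add: algebra_simps)
  have "(moebius a b c d \<circ> moebius a' b' c' d') (proj_point x y) =
      proj_point (a * (a' * x + b' * y) + b * (c' * x + d' * y))
        (c * (a' * x + b' * y) + d * (c' * x + d' * y))"
    using assms xy linear_image_nonzero[OF assms(2) xy] by (simp add: moebius_proj_point)
  also have "\<dots> = moebius (a * a' + b * c') (a * b' + b * d') (c * a' + d * c') (c * b' + d * d')
      (proj_point x y)"
  proof -
    have "(a * a' + b * c') * (c * b' + d * d') - (a * b' + b * d') * (c * a' + d * c') \<noteq> 0"
      using assms by (simp only: det) simp
    from moebius_proj_point[OF this xy] show ?thesis by (simp add: algebra_simps)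
  qed
  finally show "(moebius a b c d \<circ> moebius a' b' c' d') (proj_point x y) =
    moebius (a * a' + b * c') (a * b' + b * d') (c * a' + d * c') (c * b' + d * d') (proj_point x y)" .
qed

lemma moebius_scale: "s \<noteq> 0 \<Longrightarrow> moebius (s * a) (s * b) (s * c) (s * d) = moebius a b c d"
  by (auto simp: moebius_def fun_eq_iff distrib_left[symmetric] mult.assoc split: option.split)

lemma moebius_scalar: "a \<noteq> 0 \<Longrightarrow> moebius a 0 0 a = id"
  by (auto simp: moebius_def fun_eq_iff split: option.split)

lemma moebius_inverse:
  assumes "a * d - b * c \<noteq> 0"
  shows "moebius d (- b) (- c) a \<circ> moebius a b c d = id"
    and "moebius a b c d \<circ> moebius d (- b) (- c) a = id"
  using assms
  by (simp_all add: moebius_comp algebra_simps moebius_scalar[of "a * d - b * c", symmetric])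

lemma inv_moebius:
  "a * d - b * c \<noteq> 0 \<Longrightarrow> inv (moebius a b c d) = moebius d (- b) (- c) a"
  using moebius_inverse by (rule inv_unique_comp[rotated])

lemma bij_moebius: "a * d - b * c \<noteq> 0 \<Longrightarrow> bij (moebius a b c d)"
  using moebius_inverse o_bij by blast

lemma moebius_in_Moeb: "a * d - b * c \<noteq> 0 \<Longrightarrow> moebius a b c d \<in> Moeb"
  unfolding Moeb_def by blast

lemma MoebE:
  assumes "g \<in> Moeb"
  obtains a b c d where "a * d - b * c \<noteq> 0" "g = moebius a b c d"
  using assms unfolding Moeb_def by blast

lemma Moeb_bij: "g \<in> Moeb \<Longrightarrow> bij g"
  by (auto elim: MoebE simp: bij_moebius)

lemma id_in_Moeb: "id \<in> Moeb"
  using moebius_in_Moeb[of 1 1 0 0] moebius_scalar[of 1] by simp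

lemma Moeb_inv: "g \<in> Moeb \<Longrightarrow> inv g \<in> Moeb"
  by (erule MoebE) (auto simp: inv_moebius algebra_simps intro: moebius_in_Moeb)

lemma Moeb_comp:
  assumes "g \<in> Moeb" "h \<in> Moeb"
  shows "g \<circ> h \<in> Moeb"
proof -
  obtain a b c d a' b' c' d' where det: "a * d - b * c \<noteq> 0" "a' * d' - b' * c' \<noteq> 0"
    and gh: "g = moebius a b c d" "h = moebius a' b' c' d'"
    using assms by (meson MoebE)
  have "(a * a' + b * c') * (c * b' + d * d') - (a * b' + b * d') * (c * a' + d * c')
      = (a * d - b * c) * (a' * d' - b' * c')"
    by (simp add: algebra_simps)
  then show ?thesis
    using det by (simp add: gh moebius_comp moebius_in_Moeb)
qed

lemma inv_conj_cancel: "bij k \<Longrightarrow> inv k \<circ> (k \<circ> h \<circ> inv k) \<circ> k = h"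
  and conj_inv_cancel: "bij k \<Longrightarrow> k \<circ> (inv k \<circ> h \<circ> k) \<circ> inv k = h"
  by (simp_all add: fun_eq_iff bij_is_inj bij_is_surj surj_f_inv_f)

lemma Moeb_normalize_three:
  assumes "w1 \<noteq> w2" "w1 \<noteq> w3" "w2 \<noteq> w3"
  obtains K where "K \<in> Moeb" "K w1 = Some 0" "K w2 = Some 1" "K w3 = None"
proof -
  obtain x1 y1 where nz1: "(x1, y1) \<noteq> (0, 0)" and w1: "w1 = proj_point x1 y1"
    by (rule proj_point_cases)
  obtain x2 y2 where nz2: "(x2, y2) \<noteq> (0, 0)" and w2: "w2 = proj_point x2 y2"
    by (rule proj_point_cases)
  obtain x3 y3 where nz3: "(x3, y3) \<noteq> (0, 0)" and w3: "w3 = proj_point x3 y3"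
    by (rule proj_point_cases)
  note nz = nz1 nz2 nz3 and w = w1 w2 w3
  \<comment> \<open>\<open>K (x, y) = (s (y1 x - x1 y), t (y3 x - x3 y))\<close> vanishes in the first entry at \<open>w1\<close>,
    in the second at \<open>w3\<close>, and \<open>s, t\<close> make the entries agree at \<open>w2\<close>.\<close>
  have indep: "x1 * y2 \<noteq> y1 * x2" "x1 * y3 \<noteq> y1 * x3" "x2 * y3 \<noteq> y2 * x3"
    using assms nz proj_point_eq_iff unfolding w by blast+
  define s where "s = y3 * x2 - x3 * y2"
  define t where "t = y1 * x2 - x1 * y2"
  have st: "s \<noteq> 0" "t \<noteq> 0" using indep by (auto simp: s_def t_def algebra_simps)
  let ?a = "s * y1" and ?b = "- s * x1" and ?c = "t * y3" and ?d = "- t * x3"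
  have "?a * ?d - ?b * ?c = s * t * (x1 * y3 - y1 * x3)" by (simp add: algebra_simps)
  then have det: "?a * ?d - ?b * ?c \<noteq> 0" using st indep by simp
  have K: "moebius ?a ?b ?c ?d (proj_point x y) =
      proj_point (s * (y1 * x - x1 * y)) (t * (y3 * x - x3 * y))" if "(x, y) \<noteq> (0, 0)" for x y
    using moebius_proj_point[OF det that] by (simp add: algebra_simps)
  have "s * (y1 * x2 - x1 * y2) = s * t" "t * (y3 * x2 - x3 * y2) = s * t"
    by (simp_all add: s_def t_def algebra_simps)
  then have "moebius ?a ?b ?c ?d w2 = Some 1"
    using K[OF nz(2)] st by (simp add: w proj_point_def)
  moreover have "moebius ?a ?b ?c ?d w1 = Some 0" "moebius ?a ?b ?c ?d w3 = None"
    using K[OF nz(1)] K[OF nz(3)] st indep by (simp_all add: w proj_point_def algebra_simps)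
  ultimately show ?thesis using that moebius_in_Moeb[OF det] by blast
qed

lemma Moeb_fixing_01inf:
  assumes "g \<in> Moeb" "g (Some 0) = Some 0" "g (Some 1) = Some 1" "g None = None"
  shows "g = id"
proof -
  obtain a b c d where det: "a * d - b * c \<noteq> 0" and g: "g = moebius a b c d"
    using assms(1) by (rule MoebE)
  have "c = 0" using assms(4) by (simp add: g moebius_def split: if_splits)
  moreover from this have "d \<noteq> 0" using det by auto
  moreover from calculation have "b = 0" "a = d"
    using assms(2,3) by (simp_all add: g moebius_def)
  ultimately show ?thesis using g moebius_scalar by simp
qed

lemma Moeb_eq_on_three:
  assumes "g \<in> Moeb" "h \<in> Moeb" "w1 \<noteq> w2" "w1 \<noteq> w3" "w2 \<noteq> w3"
    and "g w1 = h w1" "g w2 = h w2" "g w3 = h w3"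
  shows "g = h"
proof -
  obtain K where K: "K \<in> Moeb" "K w1 = Some 0" "K w2 = Some 1" "K w3 = None"
    using Moeb_normalize_three[OF assms(3-5)] .
  have bij: "bij K" "bij h" using K(1) assms(2) by (simp_all add: Moeb_bij)
  let ?k = "K \<circ> (inv h \<circ> g) \<circ> inv K"
  have k_fix: "?k (K w) = K w" if "g w = h w" for w
    using that bij by (simp add: bij_is_inj)
  have "?k \<in> Moeb" using assms(1,2) K(1) by (simp add: Moeb_comp Moeb_inv)
  moreover have "?k (Some 0) = Some 0" "?k (Some 1) = Some 1" "?k None = None"
    using k_fix[OF assms(6)] k_fix[OF assms(7)] k_fix[OF assms(8)] unfolding K(2-4) .
  ultimately have "?k = id" by (rule Moeb_fixing_01inf)
  then have hg: "inv h \<circ> g = id" using inv_conj_cancel[OF bij(1), of "inv h \<circ> g"] bij(1)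
    by (simp add: bij_is_inj)
  have "h \<circ> inv h = id" using bij(2) bij_is_surj surj_iff by blast
  then have "g = (h \<circ> inv h) \<circ> g" by simp
  also have "\<dots> = h" using hg by (simp add: comp_assoc)
  finally show ?thesis .
qed

lemma Moeb_three_transitive:
  assumes "w1 \<noteq> w2" "w1 \<noteq> w3" "w2 \<noteq> w3" "v1 \<noteq> v2" "v1 \<noteq> v3" "v2 \<noteq> v3"
  obtains g where "g \<in> Moeb" "g w1 = v1" "g w2 = v2" "g w3 = v3"
proof -
  obtain K where K: "K \<in> Moeb" "K w1 = Some 0" "K w2 = Some 1" "K w3 = None"
    using Moeb_normalize_three[OF assms(1-3)] .
  obtain L where L: "L \<in> Moeb" "L v1 = Some 0" "L v2 = Some 1" "L v3 = None"
    using Moeb_normalize_three[OF assms(4-6)] .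
  have "inj L" using L(1) by (simp add: Moeb_bij bij_is_inj)
  then have "(inv L \<circ> K) w1 = v1" "(inv L \<circ> K) w2 = v2" "(inv L \<circ> K) w3 = v3"
    by (simp_all add: K(2-4) L(2-4)[symmetric])
  moreover have "inv L \<circ> K \<in> Moeb" using K(1) L(1) by (simp add: Moeb_comp Moeb_inv)
  ultimately show ?thesis using that by blast
qed

lemma Moeb_normalize_two:
  assumes "u \<noteq> v"
  obtains K where "K \<in> Moeb" "K u = Some 0" "K v = None"
proof -
  have "\<exists>w \<in> {Some 0, Some 1, None}. w \<noteq> u \<and> w \<noteq> v" by auto
  then obtain w where "w \<noteq> u" "w \<noteq> v" by blast
  with assms show ?thesis using Moeb_normalize_three[of u w v] that by blast
qed

section \<open>Conjugation and automorphism groups\<close>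

lemma Aut_iff_commute: "g \<in> Aut f \<longleftrightarrow> g \<in> Moeb \<and> g \<circ> f = f \<circ> g"
proof (cases "g \<in> Moeb")
  case True
  then have "bij g" by (rule Moeb_bij)
  then have "inv g \<circ> g = id" "g \<circ> inv g = id"
    by (simp_all add: bij_is_inj bij_is_surj surj_iff[symmetric])
  then have "g \<circ> f \<circ> inv g = f \<longleftrightarrow> g \<circ> f = f \<circ> g"
    by (metis comp_assoc comp_id)
  then show ?thesis using True by (simp add: Aut_def)
qed (simp add: Aut_def)

lemma id_in_Aut: "id \<in> Aut f"
  by (simp add: Aut_iff_commute id_in_Moeb)

lemma Aut_image_fixpts:
  assumes "g \<in> Aut f" "finite (fixpts f)"
  shows "g ` fixpts f = fixpts f"
proof (rule endo_inj_surj[OF assms(2)])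
  show "g ` fixpts f \<subseteq> fixpts f"
    using assms(1) by (auto simp: Aut_iff_commute fixpts_def fun_eq_iff) metis
  show "inj_on g (fixpts f)"
    using assms(1) by (auto simp: Aut_iff_commute intro: inj_on_subset bij_is_inj Moeb_bij)
qed

lemma fixpts_conj: "bij k \<Longrightarrow> fixpts (k \<circ> f \<circ> inv k) = k ` fixpts f"
  by (auto simp: fixpts_def bij_inv_eq_iff image_iff bij_is_inj) (metis bij_inv_eq_iff)

lemma conj_in_Aut:
  assumes "k \<in> Moeb" "g \<in> Aut f"
  shows "k \<circ> g \<circ> inv k \<in> Aut (k \<circ> f \<circ> inv k)"
proof -
  have "inj k" using assms(1) by (simp add: Moeb_bij bij_is_inj)
  then have "(k \<circ> g \<circ> inv k) \<circ> (k \<circ> f \<circ> inv k) = k \<circ> (g \<circ> f) \<circ> inv k"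
    and "(k \<circ> f \<circ> inv k) \<circ> (k \<circ> g \<circ> inv k) = k \<circ> (f \<circ> g) \<circ> inv k"
    by (simp_all add: fun_eq_iff)
  with assms show ?thesis by (simp add: Aut_iff_commute Moeb_comp Moeb_inv)
qed

lemma Aut_conj:
  assumes "k \<in> Moeb"
  shows "Aut (k \<circ> f \<circ> inv k) = (\<lambda>g. k \<circ> g \<circ> inv k) ` Aut f"
proof
  show "(\<lambda>g. k \<circ> g \<circ> inv k) ` Aut f \<subseteq> Aut (k \<circ> f \<circ> inv k)"
    using conj_in_Aut[OF assms] by blast
next
  have k: "bij k" "inv (inv k) = k" using assms by (simp_all add: Moeb_bij inv_inv_eq)
  show "Aut (k \<circ> f \<circ> inv k) \<subseteq> (\<lambda>g. k \<circ> g \<circ> inv k) ` Aut f"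
  proof
    fix h assume "h \<in> Aut (k \<circ> f \<circ> inv k)"
    then have "inv k \<circ> h \<circ> k \<in> Aut f"
      using conj_in_Aut[OF Moeb_inv[OF assms]] k by (metis inv_conj_cancel)
    moreover have "h = k \<circ> (inv k \<circ> h \<circ> k) \<circ> inv k" using conj_inv_cancel[OF k(1)] by simp
    ultimately show "h \<in> (\<lambda>g. k \<circ> g \<circ> inv k) ` Aut f" by blast
  qed
qed

lemma Aut_eq_conj_image:
  assumes "K \<in> Moeb"
  shows "Aut f = (\<lambda>g. inv K \<circ> g \<circ> K) ` Aut (K \<circ> f \<circ> inv K)"
  by (simp add: Aut_conj[OF assms] image_image inv_conj_cancel[OF Moeb_bij[OF assms]])

section \<open>Degree-two maps as pairs of binary quadratic forms\<close>

lemma coprime_iff_no_common_root: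
  fixes P Q :: "'a::alg_closed_field poly"
  shows "coprime P Q \<longleftrightarrow> (\<forall>z. poly P z \<noteq> 0 \<or> poly Q z \<noteq> 0)"
proof
  assume no_root: "\<forall>z. poly P z \<noteq> 0 \<or> poly Q z \<noteq> 0"
  show "coprime P Q"
  proof (rule coprimeI)
    fix D assume D: "D dvd P" "D dvd Q"
    then have "poly D z \<noteq> 0" for z
      using no_root by (metis dvd_trans poly_eq_0_iff_dvd)
    then show "is_unit D"
      using alg_closed_imp_poly_has_root is_unit_iff_degree by (metis gr0I poly_0)
  qed
qed (use coprime_poly_0 in blast)

datatype coeffs = Coeffs (p0: complex) (p1: complex) (p2: complex) (q0: complex) (q1: complex) (q2: complex)

definition hom_P :: "coeffs \<Rightarrow> complex \<Rightarrow> complex \<Rightarrow> complex" where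
  "hom_P c x y = p2 c * x^2 + p1 c * x * y + p0 c * y^2"

definition hom_Q :: "coeffs \<Rightarrow> complex \<Rightarrow> complex \<Rightarrow> complex" where
  "hom_Q c x y = q2 c * x^2 + q1 c * x * y + q0 c * y^2"

definition rat_map :: "coeffs \<Rightarrow> sphere \<Rightarrow> sphere" where
  "rat_map c w = (case w of
      Some z \<Rightarrow> (if hom_Q c z 1 = 0 then None else Some (hom_P c z 1 / hom_Q c z 1))
    | None \<Rightarrow> (if q2 c = 0 then None else Some (p2 c / q2 c)))"

definition nondeg :: "coeffs \<Rightarrow> bool" where
  "nondeg c \<longleftrightarrow> (\<forall>x y. hom_P c x y = 0 \<and> hom_Q c x y = 0 \<longrightarrow> x = 0 \<and> y = 0)"

definition poly_coeffs :: "complex poly \<Rightarrow> complex poly \<Rightarrow> coeffs" where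
  "poly_coeffs P Q = Coeffs (coeff P 0) (coeff P 1) (coeff P 2) (coeff Q 0) (coeff Q 1) (coeff Q 2)"

lemma hom_nonzero: "nondeg c \<Longrightarrow> (x, y) \<noteq> (0, 0) \<Longrightarrow> (hom_P c x y, hom_Q c x y) \<noteq> (0, 0)"
  unfolding nondeg_def prod.inject by blast

lemma hom_dehomogenize:
  "y \<noteq> 0 \<Longrightarrow> hom_P c x y = y^2 * hom_P c (x / y) 1"
  "y \<noteq> 0 \<Longrightarrow> hom_Q c x y = y^2 * hom_Q c (x / y) 1"
  by (simp_all add: hom_P_def hom_Q_def field_simps power2_eq_square)

lemma rat_map_proj_point:
  assumes "nondeg c" "(x, y) \<noteq> (0, 0)"
  shows "rat_map c (proj_point x y) = proj_point (hom_P c x y) (hom_Q c x y)"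
proof (cases "y = 0")
  case True
  then have "x \<noteq> 0" using assms by auto
  then show ?thesis using True by (simp add: rat_map_def proj_point_def hom_P_def hom_Q_def)
next
  case False
  then show ?thesis by (simp add: rat_map_def proj_point_def hom_dehomogenize[OF False])
qed

lemma poly_degree_le_2:
  fixes P :: "'a::comm_semiring_1 poly"
  assumes "degree P \<le> 2"
  shows "poly P z = coeff P 0 + coeff P 1 * z + coeff P 2 * z^2"
proof -
  have "poly P z = (\<Sum>i\<le>degree P. coeff P i * z ^ i)" by (rule poly_altdef)
  also have "\<dots> = (\<Sum>i\<le>2. coeff P i * z ^ i)"
    using assms by (intro sum.mono_neutral_left) (auto simp: coeff_eq_0)
  finally show ?thesis by (simp add: numeral_2_eq_2)
qed

lemma poly_coeffs_hom:
  assumes "degree P \<le> 2" "degree Q \<le> 2"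
  shows "hom_P (poly_coeffs P Q) z 1 = poly P z" "hom_Q (poly_coeffs P Q) z 1 = poly Q z"
  using assms by (simp_all add: poly_degree_le_2 hom_P_def hom_Q_def poly_coeffs_def algebra_simps)

lemma rat_eval_eq_rat_map:
  assumes "degree P \<le> 2" "degree Q \<le> 2"
  shows "rat_eval P Q = rat_map (poly_coeffs P Q)"
proof
  fix w show "rat_eval P Q w = rat_map (poly_coeffs P Q) w"
    by (cases w) (simp add: rat_eval_def rat_map_def poly_coeffs_def,
        simp add: rat_eval_def rat_map_def poly_coeffs_hom[OF assms])
qed

lemma nondeg_iff:
  "nondeg c \<longleftrightarrow> (p2 c \<noteq> 0 \<or> q2 c \<noteq> 0) \<and> (\<forall>z. hom_P c z 1 \<noteq> 0 \<or> hom_Q c z 1 \<noteq> 0)"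
proof
  assume "nondeg c"
  then show "(p2 c \<noteq> 0 \<or> q2 c \<noteq> 0) \<and> (\<forall>z. hom_P c z 1 \<noteq> 0 \<or> hom_Q c z 1 \<noteq> 0)"
    using hom_nonzero[of c 1 0] hom_nonzero[of c _ 1] by (auto simp: hom_P_def hom_Q_def)
next
  assume c: "(p2 c \<noteq> 0 \<or> q2 c \<noteq> 0) \<and> (\<forall>z. hom_P c z 1 \<noteq> 0 \<or> hom_Q c z 1 \<noteq> 0)"
  show "nondeg c" unfolding nondeg_def
  proof (intro allI impI)
    fix x y assume xy: "hom_P c x y = 0 \<and> hom_Q c x y = 0"
    show "x = 0 \<and> y = 0"
    proof (cases "y = 0")
      case True
      then show ?thesis using xy c by (auto simp: hom_P_def hom_Q_def)
    next
      case False
      then have "hom_P c (x / y) 1 = 0 \<and> hom_Q c (x / y) 1 = 0"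
        using xy by (simp add: hom_dehomogenize[OF False])
      then show ?thesis using c by blast
    qed
  qed
qed

lemma nondeg_poly_coeffs_iff:
  assumes "degree P \<le> 2" "degree Q \<le> 2"
  shows "nondeg (poly_coeffs P Q) \<longleftrightarrow> coprime P Q \<and> max (degree P) (degree Q) = 2"
proof -
  have "coeff R 2 \<noteq> 0 \<longleftrightarrow> degree R = 2" if "degree R \<le> 2" for R :: "complex poly"
  proof
    assume "coeff R 2 \<noteq> 0"
    then show "degree R = 2" using that le_degree[of R 2] by simp
  next
    assume "degree R = 2"
    then show "coeff R 2 \<noteq> 0" using leading_coeff_neq_0[of R] by fastforce
  qed
  then have "(coeff P 2 \<noteq> 0 \<or> coeff Q 2 \<noteq> 0) \<longleftrightarrow> max (degree P) (degree Q) = 2"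
    using assms by (auto simp: max_def)
  then show ?thesis
    by (simp add: nondeg_iff coprime_iff_no_common_root poly_coeffs_hom[OF assms])
      (auto simp: poly_coeffs_def)
qed

lemma Rat2_eq: "Rat2 = rat_map ` Collect nondeg"
proof
  show "Rat2 \<subseteq> rat_map ` Collect nondeg"
  proof
    fix f assume "f \<in> Rat2"
    then obtain P Q where f: "f = rat_eval P Q" and PQ: "coprime P Q" "max (degree P) (degree Q) = 2"
      by (auto simp: Rat2_def)
    then have deg: "degree P \<le> 2" "degree Q \<le> 2" by auto
    show "f \<in> rat_map ` Collect nondeg"
      using PQ nondeg_poly_coeffs_iff[OF deg] rat_eval_eq_rat_map[OF deg] f by blast
  qed
next
  show "rat_map ` Collect nondeg \<subseteq> Rat2"
  proof
    fix f assume "f \<in> rat_map ` Collect nondeg"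
    then obtain c where c: "nondeg c" "f = rat_map c" by blast
    define P where "P = [:p0 c, p1 c, p2 c:]"
    define Q where "Q = [:q0 c, q1 c, q2 c:]"
    have deg: "degree P \<le> 2" "degree Q \<le> 2"
      unfolding P_def Q_def by (auto simp: degree_pCons_eq_if)
    have "poly_coeffs P Q = c" by (cases c) (simp add: P_def Q_def poly_coeffs_def numeral_2_eq_2)
    then have "f = rat_eval P Q" "coprime P Q \<and> max (degree P) (degree Q) = 2"
      using c nondeg_poly_coeffs_iff[OF deg] rat_eval_eq_rat_map[OF deg] by simp_all
    then show "f \<in> Rat2" by (auto simp: Rat2_def)
  qed
qed

section \<open>Conjugation and multipliers in coordinates\<close>

definition conj_coeffs :: "complex \<Rightarrow> complex \<Rightarrow> complex \<Rightarrow> complex \<Rightarrow> coeffs \<Rightarrow> coeffs" where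
  "conj_coeffs a b c d f = (let
     A2 = p2 f * d^2 - p1 f * c * d + p0 f * c^2;
     A1 = - 2 * b * d * p2 f + (a * d + b * c) * p1 f - 2 * a * c * p0 f;
     A0 = b^2 * p2 f - a * b * p1 f + a^2 * p0 f;
     B2 = q2 f * d^2 - q1 f * c * d + q0 f * c^2;
     B1 = - 2 * b * d * q2 f + (a * d + b * c) * q1 f - 2 * a * c * q0 f;
     B0 = b^2 * q2 f - a * b * q1 f + a^2 * q0 f
   in Coeffs (a * A0 + b * B0) (a * A1 + b * B1) (a * A2 + b * B2)
        (c * A0 + d * B0) (c * A1 + d * B1) (c * A2 + d * B2))"

lemma hom_P_conj: "hom_P (conj_coeffs a b c d f) x y =
    a * hom_P f (d * x - b * y) (- c * x + a * y) + b * hom_Q f (d * x - b * y) (- c * x + a * y)"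
  by (simp add: conj_coeffs_def Let_def hom_P_def hom_Q_def power2_eq_square algebra_simps)

lemma hom_Q_conj: "hom_Q (conj_coeffs a b c d f) x y =
    c * hom_P f (d * x - b * y) (- c * x + a * y) + d * hom_Q f (d * x - b * y) (- c * x + a * y)"
  by (simp add: conj_coeffs_def Let_def hom_P_def hom_Q_def power2_eq_square algebra_simps)

lemma adjugate_image_nonzero:
  fixes a b c d x y :: complex
  assumes "a * d - b * c \<noteq> 0" "(x, y) \<noteq> (0, 0)"
  shows "(d * x - b * y, - c * x + a * y) \<noteq> (0, 0)"
proof -
  have "d * a - (- b) * (- c) \<noteq> 0" using assms(1) by (simp add: algebra_simps)
  from linear_image_nonzero[OF this assms(2)] show ?thesis by simp
qed

lemma nondeg_conj:
  assumes "a * d - b * c \<noteq> 0" "nondeg f"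
  shows "nondeg (conj_coeffs a b c d f)"
  unfolding nondeg_def hom_P_conj hom_Q_conj
  using linear_image_nonzero[OF assms(1) hom_nonzero[OF assms(2) adjugate_image_nonzero[OF assms(1)]]]
  by blast

lemma rat_map_conj:
  assumes det: "a * d - b * c \<noteq> 0" and f: "nondeg f"
  shows "moebius a b c d \<circ> rat_map f \<circ> inv (moebius a b c d) = rat_map (conj_coeffs a b c d f)"
proof (rule sphere_fun_eqI)
  fix x y :: complex
  assume xy: "(x, y) \<noteq> (0, 0)"
  let ?u = "d * x - b * y" and ?v = "- c * x + a * y"
  have uv: "(?u, ?v) \<noteq> (0, 0)" using adjugate_image_nonzero[OF det xy] .
  have "inv (moebius a b c d) (proj_point x y) = proj_point ?u ?v"
    using moebius_proj_point[where a = d and b = "- b" and c = "- c" and d = a, OF _ xy] det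
    by (simp add: inv_moebius algebra_simps)
  then show "(moebius a b c d \<circ> rat_map f \<circ> inv (moebius a b c d)) (proj_point x y) =
      rat_map (conj_coeffs a b c d f) (proj_point x y)"
    using rat_map_proj_point[OF f uv] moebius_proj_point[OF det hom_nonzero[OF f uv]]
      rat_map_proj_point[OF nondeg_conj[OF det f] xy]
    by (simp add: hom_P_conj hom_Q_conj)
qed

lemma Rat2_conj:
  assumes "f \<in> Rat2" "k \<in> Moeb"
  shows "k \<circ> f \<circ> inv k \<in> Rat2"
  using assms rat_map_conj nondeg_conj unfolding Rat2_eq by (fastforce elim: MoebE)

lemma rat_map_fixed_iff:
  assumes "nondeg c" "(x, y) \<noteq> (0, 0)"
  shows "rat_map c (proj_point x y) = proj_point x y \<longleftrightarrow> hom_P c x y * y = hom_Q c x y * x"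
  using rat_map_proj_point[OF assms] proj_point_eq_iff[OF hom_nonzero[OF assms] assms(2)] by simp

lemma rat_map_fixed_Some_iff:
  "nondeg c \<Longrightarrow> rat_map c (Some z) = Some z \<longleftrightarrow> hom_P c z 1 = hom_Q c z 1 * z"
  using rat_map_fixed_iff[of c z 1] by (simp add: proj_point_def)

lemma rat_map_fixed_None_iff: "rat_map c None = None \<longleftrightarrow> q2 c = 0"
  by (simp add: rat_map_def)

definition hom_jacobian :: "coeffs \<Rightarrow> complex \<Rightarrow> complex \<Rightarrow> complex" where
  "hom_jacobian f x y = (2 * p2 f * x + p1 f * y) * (q1 f * x + 2 * q0 f * y)
     - (p1 f * x + 2 * p0 f * y) * (2 * q2 f * x + q1 f * y)"

definition hom_eigenvalue :: "coeffs \<Rightarrow> complex \<Rightarrow> complex \<Rightarrow> complex" where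
  "hom_eigenvalue f x y = (if y \<noteq> 0 then hom_Q f x y / y else hom_P f x y / x)"

text \<open>At a fixed point \<open>(x, y)\<close>, Euler's identity makes \<open>(x, y)\<close> an eigenvector of the
  Jacobian of \<open>(P, Q)\<close> with eigenvalue \<open>2 \<lambda>\<close>, where \<open>(P, Q) (x, y) = \<lambda> (x, y)\<close>; the other
  eigenvalue is \<open>\<lambda>\<close> times the multiplier.\<close>
definition hom_multiplier :: "coeffs \<Rightarrow> complex \<Rightarrow> complex \<Rightarrow> complex" where
  "hom_multiplier f x y = hom_jacobian f x y / (2 * (hom_eigenvalue f x y)^2)"

lemma multiplier_rat_map_Some:
  assumes fixed: "rat_map f (Some z) = Some z"
  shows "multiplier (rat_map f) (Some z) = hom_multiplier f z 1"
proof -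
  have Qz: "hom_Q f z 1 \<noteq> 0" using fixed by (auto simp: rat_map_def split: if_splits)
  have "continuous_on UNIV (\<lambda>w. hom_Q f w 1)" unfolding hom_Q_def by (intro continuous_intros)
  then have "open {w. hom_Q f w 1 \<noteq> 0}" using open_Collect_neq continuous_on_const by blast
  then have ev: "eventually (\<lambda>w. the (rat_map f (Some w)) = hom_P f w 1 / hom_Q f w 1) (nhds z)"
    unfolding eventually_nhds using Qz by (intro exI[of _ "{w. hom_Q f w 1 \<noteq> 0}"]) (auto simp: rat_map_def)
  have D: "((\<lambda>w. hom_P f w 1 / hom_Q f w 1) has_field_derivative
     ((2 * p2 f * z + p1 f) * hom_Q f z 1 - hom_P f z 1 * (2 * q2 f * z + q1 f)) / (hom_Q f z 1 * hom_Q f z 1)) (at z)"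
    using Qz unfolding hom_P_def hom_Q_def
    by (auto intro!: derivative_eq_intros simp: power2_eq_square algebra_simps)
  have "multiplier (rat_map f) (Some z) = deriv (\<lambda>w. hom_P f w 1 / hom_Q f w 1) z"
    unfolding multiplier_def using deriv_cong_ev[OF ev refl] by simp
  also have "\<dots> = ((2 * p2 f * z + p1 f) * hom_Q f z 1 - hom_P f z 1 * (2 * q2 f * z + q1 f))
      / (hom_Q f z 1 * hom_Q f z 1)"
    using DERIV_imp_deriv[OF D] .
  also have "\<dots> = hom_multiplier f z 1"
    unfolding hom_multiplier_def hom_eigenvalue_def hom_jacobian_def using Qz
    by (simp add: field_simps power2_eq_square) (simp add: hom_P_def hom_Q_def algebra_simps power2_eq_square)
  finally show ?thesis .
qed

lemma multiplier_rat_map_None: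
  assumes "nondeg f" and fixed: "rat_map f None = None"
  shows "multiplier (rat_map f) None = hom_multiplier f 1 0"
proof -
  have q2: "q2 f = 0" using fixed by (simp add: rat_map_fixed_None_iff)
  with assms(1) have p2: "p2 f \<noteq> 0" by (simp add: nondeg_iff)
  have chart: "chart_inf (rat_map f (chart_inf_inv w)) =
      (q2 f + q1 f * w + q0 f * w^2) / (p2 f + p1 f * w + p0 f * w^2)" for w
  proof (cases "w = 0")
    case True
    then show ?thesis using q2 by (simp add: chart_inf_def chart_inf_inv_def rat_map_def)
  next
    case False
    have "q2 f + q1 f * w + q0 f * w^2 = w^2 * hom_Q f (1 / w) 1"
      and "p2 f + p1 f * w + p0 f * w^2 = w^2 * hom_P f (1 / w) 1"
      using False by (simp_all add: hom_P_def hom_Q_def field_simps power2_eq_square)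
    then show ?thesis using False by (simp add: chart_inf_def chart_inf_inv_def rat_map_def)
  qed
  have D: "((\<lambda>w. (q2 f + q1 f * w + q0 f * w^2) / (p2 f + p1 f * w + p0 f * w^2)) has_field_derivative
      q1 f / p2 f) (at 0)"
    using p2 q2 by (auto intro!: derivative_eq_intros simp: power2_eq_square)
  have "multiplier (rat_map f) None = q1 f / p2 f"
    unfolding multiplier_def chart using DERIV_imp_deriv[OF D] by simp
  also have "\<dots> = hom_multiplier f 1 0"
    unfolding hom_multiplier_def hom_eigenvalue_def hom_jacobian_def hom_P_def
    using p2 q2 by (simp add: field_simps power2_eq_square)
  finally show ?thesis .
qed

lemma hom_eigenvalue_unique:
  "(x, y) \<noteq> (0, 0) \<Longrightarrow> hom_P f x y = L * x \<Longrightarrow> hom_Q f x y = L * y \<Longrightarrow> hom_eigenvalue f x y = L"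
  by (auto simp: hom_eigenvalue_def)

lemma hom_eigenvalue_fixed:
  assumes "(x, y) \<noteq> (0, 0)" "hom_P f x y * y = hom_Q f x y * x"
  shows "hom_P f x y = hom_eigenvalue f x y * x" "hom_Q f x y = hom_eigenvalue f x y * y"
  using assms by (auto simp: hom_eigenvalue_def field_simps)

lemma hom_P_scale: "hom_P f (t * x) (t * y) = t^2 * hom_P f x y"
  and hom_Q_scale: "hom_Q f (t * x) (t * y) = t^2 * hom_Q f x y"
  and hom_jacobian_scale: "hom_jacobian f (t * x) (t * y) = t^2 * hom_jacobian f x y"
  by (simp_all add: hom_P_def hom_Q_def hom_jacobian_def algebra_simps power2_eq_square)

lemma hom_multiplier_scale:
  assumes "(x, y) \<noteq> (0, 0)" "hom_P f x y * y = hom_Q f x y * x" "t \<noteq> 0"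
  shows "hom_multiplier f (t * x) (t * y) = hom_multiplier f x y"
proof -
  have "hom_eigenvalue f (t * x) (t * y) = t * hom_eigenvalue f x y"
    using assms hom_eigenvalue_fixed[OF assms(1,2)]
    by (intro hom_eigenvalue_unique) (auto simp: hom_P_scale hom_Q_scale power2_eq_square)
  then show ?thesis using assms by (simp add: hom_multiplier_def hom_jacobian_scale power2_eq_square)
qed

lemma multiplier_rat_map:
  assumes f: "nondeg f" and xy: "(x, y) \<noteq> (0, 0)"
    and fixed: "rat_map f (proj_point x y) = proj_point x y"
  shows "multiplier (rat_map f) (proj_point x y) = hom_multiplier f x y"
proof -
  obtain s where s: "s \<noteq> 0" "proj_coords (proj_point x y) = (s * x, s * y)"
    using proj_coords_point[OF xy] .
  have "multiplier (rat_map f) p = case_prod (hom_multiplier f) (proj_coords p)" if "rat_map f p = p" for p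
    using that by (cases p) (simp_all add: proj_coords_def multiplier_rat_map_Some multiplier_rat_map_None f)
  also have "hom_multiplier f (s * x) (s * y) = hom_multiplier f x y"
    using hom_multiplier_scale[OF xy _ s(1)] fixed rat_map_fixed_iff[OF f xy] by simp
  ultimately show ?thesis using fixed s(2) by simp
qed

lemma hom_jacobian_conj:
  "hom_jacobian (conj_coeffs a b c d f) (a * x + b * y) (c * x + d * y) = (a * d - b * c)^4 * hom_jacobian f x y"
  unfolding hom_jacobian_def conj_coeffs_def Let_def coeffs.sel power2_eq_square power4_eq_xxxx
  by algebra

lemma hom_multiplier_conj:
  assumes det: "a * d - b * c \<noteq> 0" and xy: "(x, y) \<noteq> (0, 0)"
    and fixed: "hom_P f x y * y = hom_Q f x y * x"
  shows "hom_multiplier (conj_coeffs a b c d f) (a * x + b * y) (c * x + d * y) = hom_multiplier f x y"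
proof -
  let ?D = "a * d - b * c" and ?L = "hom_eigenvalue f x y"
  have adj: "d * (a * x + b * y) - b * (c * x + d * y) = ?D * x"
    "- c * (a * x + b * y) + a * (c * x + d * y) = ?D * y"
    by (simp_all add: algebra_simps)
  have "hom_P (conj_coeffs a b c d f) (a * x + b * y) (c * x + d * y) = ?D^2 * ?L * (a * x + b * y)"
    "hom_Q (conj_coeffs a b c d f) (a * x + b * y) (c * x + d * y) = ?D^2 * ?L * (c * x + d * y)"
    unfolding hom_P_conj hom_Q_conj adj hom_P_scale hom_Q_scale hom_eigenvalue_fixed[OF xy fixed]
    by (simp_all add: algebra_simps)
  then have "hom_eigenvalue (conj_coeffs a b c d f) (a * x + b * y) (c * x + d * y) = ?D^2 * ?L"
    by (rule hom_eigenvalue_unique[OF linear_image_nonzero[OF det xy]])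
  then show ?thesis
    using det by (simp add: hom_multiplier_def hom_jacobian_conj power2_eq_square power4_eq_xxxx)
qed

lemma multiplier_rat_map_conj:
  assumes det: "a * d - b * c \<noteq> 0" and f: "nondeg f" and fixed: "rat_map f p = p"
  shows "multiplier (rat_map (conj_coeffs a b c d f)) (moebius a b c d p) = multiplier (rat_map f) p"
proof -
  obtain x y where xy: "(x, y) \<noteq> (0, 0)" and p: "p = proj_point x y"
    by (rule proj_point_cases)
  let ?g = "conj_coeffs a b c d f" and ?x = "a * x + b * y" and ?y = "c * x + d * y"
  have xy': "(?x, ?y) \<noteq> (0, 0)" using linear_image_nonzero[OF det xy] .
  have Kp: "moebius a b c d p = proj_point ?x ?y" using moebius_proj_point[OF det xy] p by simp
  have "rat_map ?g (moebius a b c d p) = moebius a b c d p"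
    using fixed bij_moebius[OF det] rat_map_conj[OF det f, symmetric] by (simp add: bij_is_inj)
  then have "multiplier (rat_map ?g) (moebius a b c d p) = hom_multiplier ?g ?x ?y"
    using multiplier_rat_map[OF nondeg_conj[OF det f] xy'] Kp by simp
  also have "\<dots> = hom_multiplier f x y"
    using hom_multiplier_conj[OF det xy] fixed rat_map_fixed_iff[OF f xy] p by simp
  also have "\<dots> = multiplier (rat_map f) p"
    using multiplier_rat_map[OF f xy] fixed p by simp
  finally show ?thesis .
qed

lemma multiplier_conj:
  assumes "f \<in> Rat2" "k \<in> Moeb" "f p = p"
  shows "multiplier (k \<circ> f \<circ> inv k) (k p) = multiplier f p"
  using assms multiplier_rat_map_conj rat_map_conj unfolding Rat2_eq by (force elim: MoebE)

lemma Aut_preserves_multiplier: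
  assumes "f \<in> Rat2" "g \<in> Aut f" "f p = p"
  shows "multiplier f (g p) = multiplier f p"
  using multiplier_conj[OF assms(1) _ assms(3), of g] assms(2) by (simp add: Aut_def)

section \<open>Normal forms\<close>

lemma rat_map_scale:
  assumes "s \<noteq> 0"
  shows "rat_map (Coeffs (s * a0) (s * a1) (s * a2) (s * b0) (s * b1) (s * b2)) =
    rat_map (Coeffs a0 a1 a2 b0 b1 b2)"
proof -
  let ?c = "Coeffs a0 a1 a2 b0 b1 b2"
  have "hom_P (Coeffs (s * a0) (s * a1) (s * a2) (s * b0) (s * b1) (s * b2)) x y = s * hom_P ?c x y"
    "hom_Q (Coeffs (s * a0) (s * a1) (s * a2) (s * b0) (s * b1) (s * b2)) x y = s * hom_Q ?c x y" for x y
    by (simp_all add: hom_P_def hom_Q_def algebra_simps)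
  then show ?thesis using assms by (auto simp: fun_eq_iff rat_map_def split: option.split)
qed

lemma rat_map_fixed_0:
  assumes "nondeg f" "rat_map f (Some 0) = Some 0"
  shows "p0 f = 0" "q0 f \<noteq> 0" "multiplier (rat_map f) (Some 0) = p1 f / q0 f"
proof -
  show p0: "p0 f = 0" using assms by (simp add: rat_map_fixed_Some_iff hom_P_def hom_Q_def)
  then show q0: "q0 f \<noteq> 0" using hom_nonzero[OF assms(1), of 0 1] by (simp add: hom_P_def hom_Q_def)
  show "multiplier (rat_map f) (Some 0) = p1 f / q0 f"
    using multiplier_rat_map_Some[OF assms(2)] p0 q0
    by (simp add: hom_multiplier_def hom_eigenvalue_def hom_jacobian_def hom_Q_def power2_eq_square)
qed

lemma rat_map_fixed_inf:
  assumes "nondeg f" "rat_map f None = None"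
  shows "q2 f = 0" "p2 f \<noteq> 0" "multiplier (rat_map f) None = q1 f / p2 f"
proof -
  show q2: "q2 f = 0" using assms(2) by (simp add: rat_map_fixed_None_iff)
  then show p2: "p2 f \<noteq> 0" using assms(1) by (simp add: nondeg_iff)
  show "multiplier (rat_map f) None = q1 f / p2 f"
    using multiplier_rat_map_None[OF assms] p2 q2
    by (simp add: hom_multiplier_def hom_eigenvalue_def hom_jacobian_def hom_P_def power2_eq_square)
qed

lemma rat_map_fixing_01inf:
  assumes f: "nondeg f" and fixed: "rat_map f (Some 0) = Some 0" "rat_map f (Some 1) = Some 1"
    "rat_map f None = None"
  defines "m0 \<equiv> multiplier (rat_map f) (Some 0)" and "mi \<equiv> multiplier (rat_map f) None"
  shows "rat_map f = rat_map (Coeffs 0 m0 ((1 - m0) / (1 - mi)) 1 (mi * ((1 - m0) / (1 - mi))) 0)"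
proof -
  note zero = rat_map_fixed_0[OF f fixed(1), folded m0_def]
  note inf = rat_map_fixed_inf[OF f fixed(3), folded mi_def]
  have one: "p2 f + p1 f = q1 f + q0 f"
    using fixed(2) zero(1) inf(1) by (simp add: rat_map_fixed_Some_iff[OF f] hom_P_def hom_Q_def)
  have "mi \<noteq> 1"
  proof
    assume "mi = 1"
    then have "q1 f = p2 f" "p1 f = q0 f" using inf one by (simp_all add: field_simps)
    then have "hom_P f (q0 f) (- p2 f) = 0 \<and> hom_Q f (q0 f) (- p2 f) = 0"
      using zero(1) inf(1) by (simp add: hom_P_def hom_Q_def power2_eq_square algebra_simps)
    then show False using f zero(2) unfolding nondeg_def by blast
  qed
  define r where "r = p2 f / q0 f"
  have "r * (1 - mi) = 1 - m0"
    using one zero(2,3) inf(2,3) unfolding r_def by (simp add: field_simps)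
  then have r: "r = (1 - m0) / (1 - mi)" using \<open>mi \<noteq> 1\<close> by (simp add: field_simps)
  have "f = Coeffs (q0 f * 0) (q0 f * m0) (q0 f * r) (q0 f * 1) (q0 f * (mi * r)) (q0 f * 0)"
    using zero inf unfolding r_def by (cases f) (simp add: field_simps)
  then show ?thesis using rat_map_scale[OF zero(2)] r by metis
qed

lemma Rat2_fixing_01inf_eq:
  assumes "f \<in> Rat2" "g \<in> Rat2"
    and "f (Some 0) = Some 0" "f (Some 1) = Some 1" "f None = None"
    and "g (Some 0) = Some 0" "g (Some 1) = Some 1" "g None = None"
    and "multiplier f (Some 0) = multiplier g (Some 0)" "multiplier f None = multiplier g None"
  shows "f = g"
proof -
  obtain c d where c: "nondeg c" "f = rat_map c" and d: "nondeg d" "g = rat_map d"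
    using assms(1,2) unfolding Rat2_eq by blast
  show ?thesis
    using rat_map_fixing_01inf[OF c(1)] rat_map_fixing_01inf[OF d(1)] assms(3-) unfolding c(2) d(2)
    by simp
qed

lemma Rat2_eq_if_fixpts_multipliers:
  assumes "f \<in> Rat2" "g \<in> Rat2" "fixpts f = {w1, w2, w3}" "fixpts g = {w1, w2, w3}"
    and "w1 \<noteq> w2" "w1 \<noteq> w3" "w2 \<noteq> w3"
    and "\<And>p. p \<in> {w1, w2, w3} \<Longrightarrow> multiplier f p = multiplier g p"
  shows "f = g"
proof -
  obtain K where K: "K \<in> Moeb" "K w1 = Some 0" "K w2 = Some 1" "K w3 = None"
    using Moeb_normalize_three[OF assms(5-7)] .
  have inj: "inj K" using K(1) by (simp add: Moeb_bij bij_is_inj)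
  have fixed: "f w = w" "g w = w" if "w \<in> {w1, w2, w3}" for w
    using that assms(3,4) by (simp_all add: fixpts_def set_eq_iff)
  have conj_fixed: "(K \<circ> h \<circ> inv K) (K w) = K w" if "h w = w" for h w
    using that inj by simp
  have conj_mult: "multiplier (K \<circ> f \<circ> inv K) (K w) = multiplier (K \<circ> g \<circ> inv K) (K w)"
    if "w \<in> {w1, w2, w3}" for w
    using multiplier_conj[OF assms(1) K(1) fixed(1)[OF that]]
      multiplier_conj[OF assms(2) K(1) fixed(2)[OF that]] assms(8)[OF that] by simp
  have "K \<circ> f \<circ> inv K = K \<circ> g \<circ> inv K"
  proof (rule Rat2_fixing_01inf_eq)
    show "K \<circ> f \<circ> inv K \<in> Rat2" "K \<circ> g \<circ> inv K \<in> Rat2"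
      using assms(1,2) K(1) by (simp_all add: Rat2_conj)
    show "(K \<circ> f \<circ> inv K) (Some 0) = Some 0" "(K \<circ> g \<circ> inv K) (Some 0) = Some 0"
      using conj_fixed[of f w1, OF fixed(1)] conj_fixed[of g w1, OF fixed(2)] unfolding K(2) by simp_all
    show "(K \<circ> f \<circ> inv K) (Some 1) = Some 1" "(K \<circ> g \<circ> inv K) (Some 1) = Some 1"
      using conj_fixed[of f w2, OF fixed(1)] conj_fixed[of g w2, OF fixed(2)] unfolding K(3) by simp_all
    show "(K \<circ> f \<circ> inv K) None = None" "(K \<circ> g \<circ> inv K) None = None"
      using conj_fixed[of f w3, OF fixed(1)] conj_fixed[of g w3, OF fixed(2)] unfolding K(4) by simp_all
    show "multiplier (K \<circ> f \<circ> inv K) (Some 0) = multiplier (K \<circ> g \<circ> inv K) (Some 0)"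
      "multiplier (K \<circ> f \<circ> inv K) None = multiplier (K \<circ> g \<circ> inv K) None"
      using conj_mult[of w1] conj_mult[of w3] unfolding K(2,4) by simp_all
  qed
  then have "inv K \<circ> (K \<circ> f \<circ> inv K) \<circ> K = inv K \<circ> (K \<circ> g \<circ> inv K) \<circ> K" by simp
  then show ?thesis by (simp only: inv_conj_cancel[OF Moeb_bij[OF K(1)]])
qed

lemma moebius_commutes_rat_map_iff:
  assumes det: "a * d - b * c \<noteq> 0" and f: "nondeg f"
  shows "moebius a b c d \<circ> rat_map f = rat_map f \<circ> moebius a b c d \<longleftrightarrow>
    (\<forall>x y. (x, y) \<noteq> (0, 0) \<longrightarrow>
       (a * hom_P f x y + b * hom_Q f x y) * hom_Q f (a * x + b * y) (c * x + d * y) =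
       (c * hom_P f x y + d * hom_Q f x y) * hom_P f (a * x + b * y) (c * x + d * y))"
    (is "?commute \<longleftrightarrow> (\<forall>x y. _ \<longrightarrow> ?cross x y)")
proof -
  have pointwise: "(moebius a b c d \<circ> rat_map f) (proj_point x y) = (rat_map f \<circ> moebius a b c d) (proj_point x y)
      \<longleftrightarrow> ?cross x y" if xy: "(x, y) \<noteq> (0, 0)" for x y
  proof -
    have PQ: "(hom_P f x y, hom_Q f x y) \<noteq> (0, 0)" using hom_nonzero[OF f xy] .
    have xy': "(a * x + b * y, c * x + d * y) \<noteq> (0, 0)" using linear_image_nonzero[OF det xy] .
    show ?thesis
      using rat_map_proj_point[OF f xy] moebius_proj_point[OF det PQ]
        moebius_proj_point[OF det xy] rat_map_proj_point[OF f xy']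
        proj_point_eq_iff[OF linear_image_nonzero[OF det PQ] hom_nonzero[OF f xy']]
      by simp
  qed
  show ?thesis
  proof
    assume ?commute
    then show "\<forall>x y. (x, y) \<noteq> (0, 0) \<longrightarrow> ?cross x y" using pointwise by simp
  next
    assume "\<forall>x y. (x, y) \<noteq> (0, 0) \<longrightarrow> ?cross x y"
    then show ?commute using pointwise by (intro sphere_fun_eqI) blast
  qed
qed

lemma moebius_fixing_0_inf:
  assumes "a * d - b * c \<noteq> 0" "moebius a b c d (Some 0) = Some 0" "moebius a b c d None = None"
  shows "b = 0" "c = 0" "a \<noteq> 0" "d \<noteq> 0"
proof -
  show c: "c = 0" using assms(3) by (simp add: moebius_def split: if_splits)
  then show "a \<noteq> 0" "d \<noteq> 0" using assms(1) by auto
  then show "b = 0" using assms(2) c by (simp add: moebius_def)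
qed

text \<open>The multipliers at \<open>0\<close> and \<open>\<infinity>\<close> are \<open>p1 / q0\<close> and \<open>q1 / p2\<close>, so exactly one of them
  is \<open>1\<close>: that fixed point is the double one.\<close>

lemma fixpts_0inf_coeffs:
  assumes f: "nondeg f" and fixpts: "fixpts (rat_map f) = {Some 0, None}"
  shows "p2 f = q1 f \<longleftrightarrow> p1 f \<noteq> q0 f"
proof -
  have "rat_map f (Some 0) = Some 0" "rat_map f None = None" using fixpts by (auto simp: fixpts_def)
  note zero = rat_map_fixed_0[OF f this(1)] and inf = rat_map_fixed_inf[OF f this(2)]
  have diff: "hom_P f z 1 - hom_Q f z 1 * z = z * ((p2 f - q1 f) * z + (p1 f - q0 f))" for z
    using zero(1) inf(1) by (simp add: hom_P_def hom_Q_def algebra_simps power2_eq_square)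
  have no_root: "(p2 f - q1 f) * z + (p1 f - q0 f) \<noteq> 0" if "z \<noteq> 0" for z
  proof
    assume "(p2 f - q1 f) * z + (p1 f - q0 f) = 0"
    then have "rat_map f (Some z) = Some z" using diff[of z] rat_map_fixed_Some_iff[OF f] by simp
    then show False using fixpts that by (auto simp: fixpts_def set_eq_iff)
  qed
  show ?thesis
  proof
    assume "p2 f = q1 f"
    then show "p1 f \<noteq> q0 f" using no_root[of 1] by simp
  next
    assume "p1 f \<noteq> q0 f"
    then show "p2 f = q1 f"
      using no_root[of "- (p1 f - q0 f) / (p2 f - q1 f)"] by (cases "p2 f = q1 f") (auto simp: field_simps)
  qed
qed

lemma scaling_commutes_rat_map_0_inf:
  assumes c: "nondeg c" "p0 c = 0" "q2 c = 0" "p2 c * q0 c - p1 c * q1 c \<noteq> 0"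
    and ad: "a \<noteq> 0" "d \<noteq> 0" and commute: "moebius a 0 0 d \<circ> rat_map c = rat_map c \<circ> moebius a 0 0 d"
  shows "a = d"
proof -
  have det: "a * d - 0 * 0 \<noteq> 0" using ad by simp
  from commute[unfolded moebius_commutes_rat_map_iff[OF det c(1)], rule_format, of 1 1]
  have "(a * hom_P c 1 1) * hom_Q c a d = (d * hom_Q c 1 1) * hom_P c a d" by simp
  moreover have "(a * hom_P c 1 1) * hom_Q c a d - (d * hom_Q c 1 1) * hom_P c a d
      = a * d * (d - a) * (p2 c * q0 c - p1 c * q1 c)"
    using c(2,3) by (simp add: hom_P_def hom_Q_def algebra_simps power2_eq_square)
  ultimately show "a = d" using ad c(4) by simp
qed

lemma Aut_fixpts_0_inf:
  assumes "f \<in> Rat2" and fixpts: "fixpts f = {Some 0, None}"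
  shows "Aut f = {id}"
proof -
  obtain c where c: "nondeg c" and f: "f = rat_map c" using assms(1) unfolding Rat2_eq by blast
  have "f (Some 0) = Some 0" "f None = None" using fixpts by (auto simp: fixpts_def)
  note zero = rat_map_fixed_0[OF c this(1)[unfolded f]]
    and inf = rat_map_fixed_inf[OF c this(2)[unfolded f]]
  have coeffs: "p2 c = q1 c \<longleftrightarrow> p1 c \<noteq> q0 c" using fixpts_0inf_coeffs[OF c] fixpts f by simp
  then have mult_ne: "multiplier f (Some 0) \<noteq> multiplier f None"
    using zero(2,3) inf(2,3) f by (auto simp: field_simps)
  have cross_ne: "p2 c * q0 c - p1 c * q1 c \<noteq> 0"
    using coeffs zero(2) inf(2) by (cases "p2 c = q1 c") (auto simp: algebra_simps)
  have "g = id" if g: "g \<in> Aut f" for g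
  proof -
    obtain a b c' d where det: "a * d - b * c' \<noteq> 0" and g_eq: "g = moebius a b c' d"
      using g by (auto simp: Aut_def elim: MoebE)
    have perm: "g ` {Some 0, None} = {Some 0, None}" using Aut_image_fixpts[OF g] fixpts by simp
    have "multiplier f (g (Some 0)) = multiplier f (Some 0)"
      using Aut_preserves_multiplier[OF assms(1) g] fixpts by (simp add: fixpts_def set_eq_iff)
    then have "g (Some 0) \<noteq> None" using mult_ne by (cases "g (Some 0)") auto
    moreover have "g (Some 0) \<in> {Some 0, None}" "g None \<in> {Some 0, None}" using perm by blast+
    moreover have "g None \<noteq> g (Some 0)"
      using bij_moebius[OF det] g_eq by (simp add: bij_is_inj inj_eq)
    ultimately have "g (Some 0) = Some 0" "g None = None" by auto
    note bc = moebius_fixing_0_inf[OF det this[unfolded g_eq]]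
    have "moebius a 0 0 d \<circ> rat_map c = rat_map c \<circ> moebius a 0 0 d"
      using g g_eq f bc(1,2) by (simp add: Aut_iff_commute)
    then have "a = d" by (rule scaling_commutes_rat_map_0_inf[OF c zero(1) inf(1) cross_ne bc(3,4)])
    then show "g = id" using g_eq bc moebius_scalar by simp
  qed
  then show ?thesis using id_in_Aut by blast
qed

lemma fixpts_inf_coeffs:
  assumes f: "nondeg f" and fixpts: "fixpts (rat_map f) = {None}"
  shows "f = Coeffs (p0 f) (q0 f) (q1 f) (q0 f) (q1 f) 0" "p0 f \<noteq> 0" "q1 f \<noteq> 0"
proof -
  have "rat_map f None = None" using fixpts by (auto simp: fixpts_def)
  note inf = rat_map_fixed_inf[OF f this]
  let ?R = "[:p0 f, p1 f - q0 f, p2 f - q1 f:]"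
  have "poly ?R z = hom_P f z 1 - hom_Q f z 1 * z" for z
    using inf(1) by (simp add: hom_P_def hom_Q_def algebra_simps power2_eq_square)
  moreover have "rat_map f (Some z) \<noteq> Some z" for z using fixpts by (auto simp: fixpts_def)
  ultimately have no_root: "poly ?R z \<noteq> 0" for z using rat_map_fixed_Some_iff[OF f] by simp
  then have "degree ?R = 0" using alg_closed_imp_poly_has_root by blast
  then have "p1 f = q0 f" "p2 f = q1 f" by (simp_all split: if_splits)
  then show "f = Coeffs (p0 f) (q0 f) (q1 f) (q0 f) (q1 f) 0" using inf(1) by (cases f) simp
  show "q1 f \<noteq> 0" using inf(2) \<open>p2 f = q1 f\<close> by simp
  show "p0 f \<noteq> 0" using no_root[of 0] by simp
qed

abbreviation parabolic_coeffs :: "complex \<Rightarrow> complex \<Rightarrow> complex \<Rightarrow> coeffs" where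
  "parabolic_coeffs e u v \<equiv> Coeffs e v u v u 0"

lemma nondeg_parabolic:
  assumes "e \<noteq> 0" "u \<noteq> 0"
  shows "nondeg (parabolic_coeffs e u v)"
proof -
  have "hom_P (parabolic_coeffs e u v) z 1 = z * hom_Q (parabolic_coeffs e u v) z 1 + e" for z
    by (simp add: hom_P_def hom_Q_def algebra_simps power2_eq_square)
  then show ?thesis using assms by (auto simp: nondeg_iff)
qed

text \<open>The map \<open>z \<mapsto> z + e / (u z + v)\<close> commutes with the point reflection in its pole \<open>- v / u\<close>.\<close>
lemma reflection_in_Aut_parabolic:
  assumes "e \<noteq> 0" "u \<noteq> 0"
  shows "moebius (- u) (- 2 * v) 0 u \<in> Aut (rat_map (parabolic_coeffs e u v))"
proof -
  have det: "- u * u - (- 2 * v) * 0 \<noteq> 0" using assms by simp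
  show ?thesis
    unfolding Aut_iff_commute moebius_commutes_rat_map_iff[OF det nondeg_parabolic[OF assms]]
    using moebius_in_Moeb[OF det]
    by (simp add: hom_P_def hom_Q_def power2_eq_square algebra_simps)
qed

lemma fixpts_parabolic:
  assumes "e \<noteq> 0" "u \<noteq> 0"
  shows "fixpts (rat_map (parabolic_coeffs e u v)) = {None}"
proof -
  have "hom_P (parabolic_coeffs e u v) z 1 \<noteq> hom_Q (parabolic_coeffs e u v) z 1 * z" for z
    using assms(1) by (simp add: hom_P_def hom_Q_def algebra_simps power2_eq_square)
  then have "rat_map (parabolic_coeffs e u v) (Some z) \<noteq> Some z" for z
    using rat_map_fixed_Some_iff[OF nondeg_parabolic[OF assms]] by simp
  then show ?thesis by (auto simp: fixpts_def rat_map_fixed_None_iff) (metis not_None_eq)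
qed

lemma affine_in_Aut_parabolic:
  assumes e: "e \<noteq> 0" and u: "u \<noteq> 0" and ad: "a \<noteq> 0" "d \<noteq> 0"
    and g: "moebius a b 0 d \<in> Aut (rat_map (parabolic_coeffs e u v))"
  shows "(a = d \<and> b = 0) \<or> (a = - d \<and> u * b = - 2 * v * d)"
proof -
  let ?F = "parabolic_coeffs e u v"
  have det: "a * d - b * 0 \<noteq> 0" using ad by simp
  have cross: "\<forall>x y. (x, y) \<noteq> (0, 0) \<longrightarrow>
       (a * hom_P ?F x y + b * hom_Q ?F x y) * hom_Q ?F (a * x + b * y) (0 * x + d * y) =
       (0 * hom_P ?F x y + d * hom_Q ?F x y) * hom_P ?F (a * x + b * y) (0 * x + d * y)"
    using g unfolding Aut_iff_commute moebius_commutes_rat_map_iff[OF det nondeg_parabolic[OF e u]]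
    by blast
  have key: "a * (u * (a * x + b) + v * d) = (u * x + v) * d^2" for x
  proof -
    have "(a * hom_P ?F x 1 + b * hom_Q ?F x 1) * hom_Q ?F (a * x + b * 1) (0 * x + d * 1) -
        (0 * hom_P ?F x 1 + d * hom_Q ?F x 1) * hom_P ?F (a * x + b * 1) (0 * x + d * 1) =
        d * e * (a * (u * (a * x + b) + v * d) - (u * x + v) * d^2)"
      by (simp add: hom_P_def hom_Q_def algebra_simps power2_eq_square)
    then show ?thesis using cross[rule_format, of x 1] ad e by simp
  qed
  have "u * ((a - d) * (a + d)) = 0"
    using key[of 0] key[of 1] by (simp add: algebra_simps power2_eq_square)
  then have "a = d \<or> a = - d" using u by (auto simp: add_eq_0_iff)
  then show ?thesis
  proof
    assume "a = d"
    then show ?thesis using key[of 0] ad u by (simp add: algebra_simps power2_eq_square)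
  next
    assume "a = - d"
    then have "d * (u * b + 2 * v * d) = 0" using key[of 0] by algebra
    then have "u * b + 2 * v * d = 0" using ad by simp
    then have "u * b = - 2 * v * d" by algebra
    then show ?thesis using \<open>a = - d\<close> by simp
  qed
qed

lemma Aut_parabolic:
  assumes e: "e \<noteq> 0" and u: "u \<noteq> 0"
  shows "Aut (rat_map (parabolic_coeffs e u v)) = {id, moebius (- u) (- 2 * v) 0 u}"
proof
  let ?f = "rat_map (parabolic_coeffs e u v)"
  show "Aut ?f \<subseteq> {id, moebius (- u) (- 2 * v) 0 u}"
  proof
    fix g assume g: "g \<in> Aut ?f"
    obtain a b c d where det: "a * d - b * c \<noteq> 0" and g_eq: "g = moebius a b c d"
      using g by (auto simp: Aut_def elim: MoebE)
    have "g None = None" using Aut_image_fixpts[OF g] fixpts_parabolic[OF e u] by simp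
    then have c: "c = 0" using g_eq by (simp add: moebius_def split: if_splits)
    with det have ad: "a \<noteq> 0" "d \<noteq> 0" by auto
    have "(a = d \<and> b = 0) \<or> (a = - d \<and> u * b = - 2 * v * d)"
      using affine_in_Aut_parabolic[OF e u ad, of b v] g g_eq c by simp
    then consider "a = d" "b = 0" | "a = - d" "u * b = - 2 * v * d" by blast
    then show "g \<in> {id, moebius (- u) (- 2 * v) 0 u}"
    proof cases
      case 1
      then show ?thesis using g_eq c ad moebius_scalar by simp
    next
      case 2
      then have "b = (d / u) * (- 2 * v)" using u by (simp add: field_simps)
      then have "g = moebius ((d / u) * (- u)) ((d / u) * (- 2 * v)) ((d / u) * 0) ((d / u) * u)"
        using g_eq c u 2(1) by simp
      also have "\<dots> = moebius (- u) (- 2 * v) 0 u" using ad u by (intro moebius_scale) simp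
      finally show ?thesis by simp
    qed
  qed
  show "{id, moebius (- u) (- 2 * v) 0 u} \<subseteq> Aut ?f"
    using id_in_Aut reflection_in_Aut_parabolic[OF e u] by blast
qed

lemma moebius_point_reflection:
  assumes "u \<noteq> 0"
  shows "moebius (- u) (- 2 * v) 0 u \<circ> moebius (- u) (- 2 * v) 0 u = id"
    and "moebius (- u) (- 2 * v) 0 u \<noteq> id"
proof -
  have det: "- u * u - (- 2 * v) * 0 \<noteq> 0" using assms by simp
  show "moebius (- u) (- 2 * v) 0 u \<circ> moebius (- u) (- 2 * v) 0 u = id"
    unfolding moebius_comp[OF det det] using moebius_scalar[of "u * u"] assms by simp
  have "moebius (- u) (- 2 * v) 0 u (Some (1 - v / u)) = Some (- 1 - v / u)"
    using assms by (simp add: moebius_def field_simps)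
  then show "moebius (- u) (- 2 * v) 0 u \<noteq> id" by auto
qed

lemma Aut_fixpts_inf:
  assumes "f \<in> Rat2" "fixpts f = {None}"
  obtains g where "g \<noteq> id" "g \<circ> g = id" "Aut f = {id, g}"
proof -
  obtain c where c: "nondeg c" and f: "f = rat_map c" using assms(1) unfolding Rat2_eq by blast
  note coeffs = fixpts_inf_coeffs[OF c assms(2)[unfolded f]]
  from coeffs(1) have "f = rat_map (parabolic_coeffs (p0 c) (q1 c) (q0 c))"
    unfolding f by (rule arg_cong)
  then have "Aut f = {id, moebius (- q1 c) (- 2 * q0 c) 0 (q1 c)}"
    using Aut_parabolic[OF coeffs(2,3)] by simp
  then show ?thesis using that moebius_point_reflection[OF coeffs(3)] by blast
qed

section \<open>Counting multiplier-preserving permutations\<close>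

definition preserving_perms :: "'a set \<Rightarrow> ('a \<Rightarrow> 'b) \<Rightarrow> ('a \<Rightarrow> 'a) set" where
  "preserving_perms A \<mu> = {\<sigma>. \<sigma> \<in> extensional A \<and> bij_betw \<sigma> A A \<and> (\<forall>z\<in>A. \<mu> (\<sigma> z) = \<mu> z)}"

lemma preserving_perms_inj_on:
  assumes "inj_on \<mu> A"
  shows "preserving_perms A \<mu> = {restrict id A}"
proof
  show "preserving_perms A \<mu> \<subseteq> {restrict id A}"
  proof
    fix \<sigma> assume "\<sigma> \<in> preserving_perms A \<mu>"
    then have ext: "\<sigma> \<in> extensional A" and bij: "bij_betw \<sigma> A A" and \<mu>: "\<forall>z\<in>A. \<mu> (\<sigma> z) = \<mu> z"
      by (auto simp: preserving_perms_def)
    have "\<sigma> z = z" if "z \<in> A" for z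
      using inj_onD[OF assms \<mu>[rule_format, OF that] bij_betw_apply[OF bij that] that] .
    then show "\<sigma> \<in> {restrict id A}" using ext by (auto intro: extensionalityI)
  qed
qed (simp add: preserving_perms_def)

lemma card_extensional_bij:
  assumes "finite A"
  shows "card {\<sigma>. \<sigma> \<in> extensional A \<and> bij_betw \<sigma> A A} = fact (card A)"
proof -
  have restrict_bij: "bij_betw (restrict p A) A A \<longleftrightarrow> bij_betw p A A" for p :: "'a \<Rightarrow> 'a"
    by (rule bij_betw_cong) simp
  have extend_bij: "bij_betw (\<lambda>x. if x \<in> A then \<sigma> x else x) A A \<longleftrightarrow> bij_betw \<sigma> A A" for \<sigma>
    by (rule bij_betw_cong) simp
  have "bij_betw (\<lambda>p. restrict p A) {p. p permutes A} {\<sigma>. \<sigma> \<in> extensional A \<and> bij_betw \<sigma> A A}"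
  proof (rule bij_betw_byWitness[where f' = "\<lambda>\<sigma> x. if x \<in> A then \<sigma> x else x"])
    show "\<forall>p\<in>{p. p permutes A}. (\<lambda>x. if x \<in> A then restrict p A x else x) = p"
      by (auto simp: fun_eq_iff permutes_not_in)
    show "\<forall>\<sigma>\<in>{\<sigma>. \<sigma> \<in> extensional A \<and> bij_betw \<sigma> A A}. restrict (\<lambda>x. if x \<in> A then \<sigma> x else x) A = \<sigma>"
      by (auto simp: fun_eq_iff extensional_def)
    show "(\<lambda>p. restrict p A) ` {p. p permutes A} \<subseteq> {\<sigma>. \<sigma> \<in> extensional A \<and> bij_betw \<sigma> A A}"
      using restrict_bij by (auto simp: permutes_imp_bij)
    show "(\<lambda>\<sigma> x. if x \<in> A then \<sigma> x else x) ` {\<sigma>. \<sigma> \<in> extensional A \<and> bij_betw \<sigma> A A} \<subseteq> {p. p permutes A}"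
      using extend_bij by (auto intro!: bij_imp_permutes)
  qed
  then show ?thesis using card_permutations[OF refl assms] by (simp add: bij_betw_same_card)
qed

lemma card_preserving_perms_const:
  assumes "finite A" "\<And>z. z \<in> A \<Longrightarrow> \<mu> z = m"
  shows "card (preserving_perms A \<mu>) = fact (card A)"
proof -
  have "preserving_perms A \<mu> = {\<sigma>. \<sigma> \<in> extensional A \<and> bij_betw \<sigma> A A}"
    using assms(2) by (auto simp: preserving_perms_def bij_betw_def)
  then show ?thesis using card_extensional_bij[OF assms(1)] by simp
qed

lemma preserving_perms_swap:
  assumes "a \<noteq> b" "a \<noteq> c" "b \<noteq> c" "\<mu> a = \<mu> b" "\<mu> c \<noteq> \<mu> a"
  shows "preserving_perms {a, b, c} \<mu> =
    {restrict id {a, b, c}, restrict (Transposition.transpose a b) {a, b, c}}"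
proof
  let ?A = "{a, b, c}"
  show "preserving_perms ?A \<mu> \<subseteq> {restrict id ?A, restrict (Transposition.transpose a b) ?A}"
  proof
    fix \<sigma> assume "\<sigma> \<in> preserving_perms ?A \<mu>"
    then have ext: "\<sigma> \<in> extensional ?A" and bij: "bij_betw \<sigma> ?A ?A"
      and \<mu>: "\<forall>z\<in>?A. \<mu> (\<sigma> z) = \<mu> z"
      by (auto simp: preserving_perms_def)
    have vals: "\<sigma> a \<in> ?A" "\<sigma> b \<in> ?A" "\<sigma> c \<in> ?A" "\<sigma> a \<noteq> \<sigma> b" "\<sigma> a \<noteq> \<sigma> c" "\<sigma> b \<noteq> \<sigma> c"
      using bij assms(1-3) by (auto simp: bij_betw_def inj_on_def)
    have "\<sigma> c = c" using vals(3) \<mu> assms(4,5) by auto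
    then consider "\<sigma> a = a" "\<sigma> b = b" | "\<sigma> a = b" "\<sigma> b = a" using vals by auto
    then show "\<sigma> \<in> {restrict id ?A, restrict (Transposition.transpose a b) ?A}"
    proof cases
      case 1
      then have "\<sigma> = restrict id ?A" using \<open>\<sigma> c = c\<close> by (intro extensionalityI[OF ext]) auto
      then show ?thesis by simp
    next
      case 2
      then have "\<sigma> = restrict (Transposition.transpose a b) ?A"
        using \<open>\<sigma> c = c\<close> assms(2,3) by (intro extensionalityI[OF ext]) auto
      then show ?thesis by simp
    qed
  qed
  show "{restrict id ?A, restrict (Transposition.transpose a b) ?A} \<subseteq> preserving_perms ?A \<mu>"
    using assms by (auto simp: preserving_perms_def bij_betw_def inj_on_def Transposition.transpose_def)
qed

lemma three_points_image_card_2: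
  assumes "card A = 3" "card (\<mu> ` A) = 2"
  obtains a b c where "A = {a, b, c}" "a \<noteq> b" "a \<noteq> c" "b \<noteq> c" "\<mu> a = \<mu> b" "\<mu> c \<noteq> \<mu> a"
proof -
  obtain w1 w2 w3 where A: "A = {w1, w2, w3}" and d: "w1 \<noteq> w2" "w1 \<noteq> w3" "w2 \<noteq> w3"
    using assms(1) unfolding card_3_iff by blast
  have "card {\<mu> w1, \<mu> w2, \<mu> w3} = 2" using assms(2) A by simp
  then consider "\<mu> w1 = \<mu> w2" "\<mu> w3 \<noteq> \<mu> w1" | "\<mu> w1 = \<mu> w3" "\<mu> w2 \<noteq> \<mu> w1"
    | "\<mu> w2 = \<mu> w3" "\<mu> w1 \<noteq> \<mu> w2"
    by (cases "\<mu> w1 = \<mu> w2"; cases "\<mu> w1 = \<mu> w3"; cases "\<mu> w2 = \<mu> w3")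
      (simp_all add: card_insert_if)
  then show ?thesis
  proof cases
    case 1
    then show ?thesis using that[of w1 w2 w3] A d by blast
  next
    case 2
    moreover have "A = {w1, w3, w2}" using A by auto
    ultimately show ?thesis using that[of w1 w3 w2] d by blast
  next
    case 3
    moreover have "A = {w2, w3, w1}" using A by auto
    ultimately show ?thesis using that[of w2 w3 w1] d by auto
  qed
qed

lemma card_preserving_perms_three:
  assumes "card A = 3"
  shows "card (\<mu> ` A) = 3 \<Longrightarrow> card (preserving_perms A \<mu>) = 1"
    and "card (\<mu> ` A) = 2 \<Longrightarrow> card (preserving_perms A \<mu>) = 2"
    and "card (\<mu> ` A) = 1 \<Longrightarrow> card (preserving_perms A \<mu>) = 6"
proof -
  have fin: "finite A" using assms by (intro card_ge_0_finite) simp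
  show "card (preserving_perms A \<mu>) = 1" if "card (\<mu> ` A) = 3"
  proof -
    have "inj_on \<mu> A" using eq_card_imp_inj_on[OF fin, of \<mu>] that assms by simp
    then show ?thesis by (simp add: preserving_perms_inj_on)
  qed
  show "card (preserving_perms A \<mu>) = 6" if one: "card (\<mu> ` A) = 1"
  proof -
    obtain m where "\<mu> ` A = {m}" using one card_1_singletonE by blast
    then have "\<mu> z = m" if "z \<in> A" for z using that by blast
    then have "card (preserving_perms A \<mu>) = fact 3"
      using card_preserving_perms_const[OF fin] assms by metis
    then show ?thesis by (simp add: numeral_3_eq_3)
  qed
  show "card (preserving_perms A \<mu>) = 2" if two: "card (\<mu> ` A) = 2"
  proof -
    obtain a b c where abc: "A = {a, b, c}" "a \<noteq> b" "a \<noteq> c" "b \<noteq> c" "\<mu> a = \<mu> b" "\<mu> c \<noteq> \<mu> a"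
      using three_points_image_card_2[OF assms two] .
    have "restrict id A a \<noteq> restrict (Transposition.transpose a b) A a" using abc by simp
    then have "restrict id A \<noteq> restrict (Transposition.transpose a b) A"
      using fun_cong[of "restrict id A" "restrict (Transposition.transpose a b) A" a] by blast
    then show ?thesis using preserving_perms_swap[OF abc(2-6)] abc(1) by simp
  qed
qed

section \<open>The automorphism group\<close>

lemma Aut_two_fixpts:
  assumes "f \<in> Rat2" "card (fixpts f) = 2"
  shows "Aut f = {id}"
proof -
  obtain u v where uv: "u \<noteq> v" "fixpts f = {u, v}" using assms(2) unfolding card_2_iff by blast
  obtain K where K: "K \<in> Moeb" "K u = Some 0" "K v = None" using Moeb_normalize_two[OF uv(1)] .
  have "fixpts (K \<circ> f \<circ> inv K) = {Some 0, None}"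
    using fixpts_conj[OF Moeb_bij[OF K(1)]] uv(2) K(2,3) by simp
  then have "Aut (K \<circ> f \<circ> inv K) = {id}"
    using Aut_fixpts_0_inf[OF Rat2_conj[OF assms(1) K(1)]] by blast
  then show ?thesis
    using Aut_eq_conj_image[OF K(1), of f] Moeb_bij[OF K(1)] by (simp add: bij_is_inj)
qed

lemma Aut_one_fixpt:
  assumes "f \<in> Rat2" "card (fixpts f) = 1"
  shows "\<exists>g. g \<noteq> id \<and> g \<circ> g = id \<and> Aut f = {id, g}"
proof -
  obtain u where u: "fixpts f = {u}" using assms(2) card_1_singletonE by blast
  have "\<exists>v. v \<noteq> u" by (cases u) auto
  then obtain K where K: "K \<in> Moeb" "K u = None" using Moeb_normalize_two by blast
  have bij: "bij K" using K(1) by (rule Moeb_bij)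
  have "fixpts (K \<circ> f \<circ> inv K) = {None}" using fixpts_conj[OF bij] u K(2) by simp
  then obtain g where g: "g \<noteq> id" "g \<circ> g = id" "Aut (K \<circ> f \<circ> inv K) = {id, g}"
    by (rule Aut_fixpts_inf[OF Rat2_conj[OF assms(1) K(1)]])
  have "Aut f = {id, inv K \<circ> g \<circ> K}"
    using Aut_eq_conj_image[OF K(1), of f] g(3) bij by (simp add: bij_is_inj)
  moreover have "inv K \<circ> g \<circ> K \<noteq> id"
  proof
    assume "inv K \<circ> g \<circ> K = id"
    then have "g = K \<circ> inv K" using conj_inv_cancel[OF bij, of g] by simp
    then show False using g(1) bij bij_is_surj surj_iff by blast
  qed
  moreover have "(inv K \<circ> g \<circ> K) \<circ> (inv K \<circ> g \<circ> K) = id"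
    using bij fun_cong[OF g(2)] by (simp add: fun_eq_iff bij_is_inj bij_is_surj surj_f_inv_f)
  ultimately show ?thesis by blast
qed

lemma inj_on_restrict_Aut:
  assumes "card (fixpts f) = 3"
  shows "inj_on (\<lambda>g. restrict g (fixpts f)) (Aut f)"
proof (rule inj_onI)
  obtain w1 w2 w3 where F: "fixpts f = {w1, w2, w3}" and d: "w1 \<noteq> w2" "w2 \<noteq> w3" "w1 \<noteq> w3"
    using assms unfolding card_3_iff by blast
  fix g h assume "g \<in> Aut f" "h \<in> Aut f" "restrict g (fixpts f) = restrict h (fixpts f)"
  then have "g \<in> Moeb" "h \<in> Moeb" "g w = h w" if "w \<in> {w1, w2, w3}" for w
    using that F by (auto simp: Aut_def dest: fun_cong[of _ _ w])
  then show "g = h" using d by (intro Moeb_eq_on_three[of g h w1 w2 w3]) auto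
qed

lemma restrict_Aut_in_preserving_perms:
  assumes f: "f \<in> Rat2" and fin: "finite (fixpts f)" and g: "g \<in> Aut f"
  shows "restrict g (fixpts f) \<in> preserving_perms (fixpts f) (multiplier f)"
proof -
  have "inj g" using g by (simp add: Aut_def Moeb_bij bij_is_inj)
  then have "bij_betw g (fixpts f) (fixpts f)"
    using Aut_image_fixpts[OF g fin] by (simp add: bij_betw_def inj_on_subset[OF _ subset_UNIV])
  moreover have "bij_betw (restrict g (fixpts f)) (fixpts f) (fixpts f) \<longleftrightarrow> bij_betw g (fixpts f) (fixpts f)"
    by (rule bij_betw_cong) simp
  moreover have "\<forall>z\<in>fixpts f. multiplier f (restrict g (fixpts f) z) = multiplier f z"
    using Aut_preserves_multiplier[OF f g] by (simp add: fixpts_def)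
  ultimately show ?thesis by (simp add: preserving_perms_def)
qed

lemma preserving_perm_extends_to_Aut:
  assumes f: "f \<in> Rat2" and card: "card (fixpts f) = 3"
    and \<sigma>: "\<sigma> \<in> preserving_perms (fixpts f) (multiplier f)"
  obtains g where "g \<in> Aut f" "restrict g (fixpts f) = \<sigma>"
proof -
  have ext: "\<sigma> \<in> extensional (fixpts f)" and bij: "bij_betw \<sigma> (fixpts f) (fixpts f)"
    and mult: "\<forall>z\<in>fixpts f. multiplier f (\<sigma> z) = multiplier f z"
    using \<sigma> by (auto simp: preserving_perms_def)
  obtain w1 w2 w3 where F: "fixpts f = {w1, w2, w3}" and d: "w1 \<noteq> w2" "w1 \<noteq> w3" "w2 \<noteq> w3"
    using card unfolding card_3_iff by blast
  have inj: "inj_on \<sigma> {w1, w2, w3}" using bij F by (simp add: bij_betw_def)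
  have "\<sigma> w1 \<noteq> \<sigma> w2" "\<sigma> w1 \<noteq> \<sigma> w3" "\<sigma> w2 \<noteq> \<sigma> w3"
    using inj_on_contraD[OF inj d(1)] inj_on_contraD[OF inj d(2)] inj_on_contraD[OF inj d(3)] by simp_all
  then obtain g where g: "g \<in> Moeb" "g w1 = \<sigma> w1" "g w2 = \<sigma> w2" "g w3 = \<sigma> w3"
    by (rule Moeb_three_transitive[OF d])
  then have g\<sigma>: "g w = \<sigma> w" if "w \<in> fixpts f" for w using that F by auto
  then have "g ` fixpts f = \<sigma> ` fixpts f" by (rule image_cong[OF refl])
  also have "\<dots> = fixpts f" using bij by (simp add: bij_betw_def)
  finally have g_fixpts: "g ` fixpts f = fixpts f" .
  have "g \<circ> f \<circ> inv g = f"
  proof (rule Rat2_eq_if_fixpts_multipliers[OF Rat2_conj[OF f g(1)] f _ F d])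
    show "fixpts (g \<circ> f \<circ> inv g) = {w1, w2, w3}"
      using fixpts_conj[OF Moeb_bij[OF g(1)]] g_fixpts F by simp
    fix p assume "p \<in> {w1, w2, w3}"
    then obtain q where q: "q \<in> fixpts f" "p = g q" using g_fixpts F by blast
    have "multiplier (g \<circ> f \<circ> inv g) p = multiplier f q"
      using multiplier_conj[OF f g(1)] q by (simp add: fixpts_def)
    also have "\<dots> = multiplier f p" using mult q g\<sigma>[OF q(1)] by simp
    finally show "multiplier (g \<circ> f \<circ> inv g) p = multiplier f p" .
  qed
  then have "g \<in> Aut f" using g(1) by (simp add: Aut_def)
  moreover have "restrict g (fixpts f) = \<sigma>"
    by (rule extensionalityI[OF restrict_extensional ext]) (simp add: g\<sigma>)
  ultimately show ?thesis using that by blast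
qed

lemma restrict_Aut_eq_preserving_perms:
  assumes "f \<in> Rat2" "card (fixpts f) = 3"
  shows "(\<lambda>g. restrict g (fixpts f)) ` Aut f = preserving_perms (fixpts f) (multiplier f)"
proof -
  have "finite (fixpts f)" using assms(2) by (intro card_ge_0_finite) simp
  then show ?thesis
    using restrict_Aut_in_preserving_perms[OF assms(1)] preserving_perm_extends_to_Aut[OF assms]
    by (auto simp: image_iff) metis
qed

theorem mainTheorem8:
  assumes "f \<in> Rat2"
  shows
    "(card (fixpts f) = 3 \<longrightarrow>
        (\<forall>g\<in>Aut f. g ` fixpts f = fixpts f)
      \<and> inj_on (\<lambda>g. restrict g (fixpts f)) (Aut f)
      \<and> (\<lambda>g. restrict g (fixpts f)) ` Aut f =
          {\<sigma>. \<sigma> \<in> extensional (fixpts f) \<and> bij_betw \<sigma> (fixpts f) (fixpts f)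
              \<and> (\<forall>z\<in>fixpts f. multiplier f (\<sigma> z) = multiplier f z)}
      \<and> (card (multiplier f ` fixpts f) = 3 \<longrightarrow> card (Aut f) = 1)
      \<and> (card (multiplier f ` fixpts f) = 2 \<longrightarrow> card (Aut f) = 2)
      \<and> (card (multiplier f ` fixpts f) = 1 \<longrightarrow> card (Aut f) = 6))
   \<and> (card (fixpts f) = 2 \<longrightarrow> Aut f = {id})
   \<and> (card (fixpts f) = 1 \<longrightarrow> (\<exists>g. g \<noteq> id \<and> g \<circ> g = id \<and> Aut f = {id, g}))"
proof (intro conjI impI)
  assume three: "card (fixpts f) = 3"
  have fin: "finite (fixpts f)" using three by (intro card_ge_0_finite) simp
  note inj = inj_on_restrict_Aut[OF three]
    and image = restrict_Aut_eq_preserving_perms[OF assms three]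
  have card_Aut: "card (Aut f) = card (preserving_perms (fixpts f) (multiplier f))"
    using card_image[OF inj] image by simp
  show "\<forall>g\<in>Aut f. g ` fixpts f = fixpts f" using Aut_image_fixpts fin by blast
  show "inj_on (\<lambda>g. restrict g (fixpts f)) (Aut f)" using inj .
  show "(\<lambda>g. restrict g (fixpts f)) ` Aut f =
      {\<sigma>. \<sigma> \<in> extensional (fixpts f) \<and> bij_betw \<sigma> (fixpts f) (fixpts f)
        \<and> (\<forall>z\<in>fixpts f. multiplier f (\<sigma> z) = multiplier f z)}"
    using image by (simp add: preserving_perms_def)
  show "card (Aut f) = 1" if "card (multiplier f ` fixpts f) = 3"
    using card_preserving_perms_three(1)[OF three that] card_Aut by simp
  show "card (Aut f) = 2" if "card (multiplier f ` fixpts f) = 2"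
    using card_preserving_perms_three(2)[OF three that] card_Aut by simp
  show "card (Aut f) = 6" if "card (multiplier f ` fixpts f) = 1"
    using card_preserving_perms_three(3)[OF three that] card_Aut by simp
next
  assume "card (fixpts f) = 2"
  then show "Aut f = {id}" by (rule Aut_two_fixpts[OF assms])
next
  assume "card (fixpts f) = 1"
  then show "\<exists>g. g \<noteq> id \<and> g \<circ> g = id \<and> Aut f = {id, g}" by (rule Aut_one_fixpt[OF assms])
qed

end
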